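(* Let $1\le k\le d$ be fixed. Then: (a) $0\le\mu_k(\rho)\le\log k$ for all $d$-dimensional states $\rho$; (b) $\mu_k(\rho)=\inf\{\nu:\ \Pi_I\rho\Pi_I\le2^\nu\Delta(\rho)\ \text{for all } I\subseteq[d] \text{ with } |I|\le k\}$; (c) $\mu_k$ is monotone under SIO: $\mu_k(\Lambda(\rho))\le\mu_k(\rho)$ for every SIO $\Lambda$ and every state $\rho$; (d) $\mu_k$ is lower semicontinuous.
   Context: Fixed computational basis $\{|i\rangle\}_{i=1}^d$; $\Delta(X)=\sum_i|i\rangle\langle i|X|i\rangle\langle i|$; $\Pi_I=\sum_{i\in I}|i\rangle\langle i|$; logs base 2; $\|\cdot\|_\infty$ is the operator norm. $R^\rho=\Delta(\rho)^{-1/2}\rho\,\Delta(\rho)^{-1/2}$ with the inverse taken on the support, and $\mu_k(\rho)=\max_{I\subseteq[d],|I|\le k}\log\|\Pi_IR^\rho\Pi_I\|_\infty$. SIO (on $\mathbb C^d$): channels $\Lambda(X)=\sum_\alpha K_\alpha XK_\alpha^\dagger$ where each $K_\alpha$ and $K_\alpha^\dagger$ maps every computational basis vector to a multiple of a computational basis vector. *)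

theory Defs
  imports "HOL-Analysis.Analysis"
begin

text \<open>Matrices on \<open>\<complex>^d\<close> are \<open>complex^'n^'n\<close> with \<open>d = CARD('n)\<close>; the computational
  basis is \<open>axis i 1\<close>, \<open>i :: 'n\<close>.\<close>

type_synonym 'n cmat = "complex^'n^'n"

definition adj :: "'n::finite cmat \<Rightarrow> 'n cmat" where
  "adj A = (\<chi> i j. cnj (A $ j $ i))"

definition hermitian :: "'n::finite cmat \<Rightarrow> bool" where
  "hermitian A \<longleftrightarrow> adj A = A"

definition psd :: "'n::finite cmat \<Rightarrow> bool" where
  "psd A \<longleftrightarrow> hermitian A \<and> (\<forall>x::complex^'n. 0 \<le> Re (\<Sum>i\<in>UNIV. cnj (x $ i) * (A *v x) $ i))"

definition loewner_le :: "'n::finite cmat \<Rightarrow> 'n cmat \<Rightarrow> bool" where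
  "loewner_le A B \<longleftrightarrow> psd (B - A)"

definition ctrace :: "'n::finite cmat \<Rightarrow> complex" where
  "ctrace A = (\<Sum>i\<in>UNIV. A $ i $ i)"

definition is_state :: "'n::finite cmat \<Rightarrow> bool" where
  "is_state \<rho> \<longleftrightarrow> psd \<rho> \<and> ctrace \<rho> = 1"

definition Dephase :: "'n::finite cmat \<Rightarrow> 'n cmat" where
  "Dephase X = (\<chi> i j. if i = j then X $ i $ i else 0)"

definition Proj :: "'n::finite set \<Rightarrow> 'n cmat" where
  "Proj I = (\<chi> i j. if i = j \<and> i \<in> I then 1 else 0)"

text \<open>\<open>\<Delta>(\<rho>)^{-1/2}\<close> with the inverse taken on the support.\<close>
definition Dinvsqrt :: "'n::finite cmat \<Rightarrow> 'n cmat" where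
  "Dinvsqrt \<rho> = (\<chi> i j. if i = j \<and> Re (\<rho> $ i $ i) > 0
                          then complex_of_real (1 / sqrt (Re (\<rho> $ i $ i))) else 0)"

definition Rmat :: "'n::finite cmat \<Rightarrow> 'n cmat" where
  "Rmat \<rho> = Dinvsqrt \<rho> ** \<rho> ** Dinvsqrt \<rho>"

definition opnorm :: "'n::finite cmat \<Rightarrow> real" where
  "opnorm A = onorm (\<lambda>x::complex^'n. A *v x)"

text \<open>\<open>\<mu>_k(\<rho>) = max_{|I|\<le>k} log \<parallel>\<Pi>_I R \<Pi>_I\<parallel>\<close>, written as \<open>log\<close> of the maximum
  (log is monotone; this also handles the value \<open>-\<infinity>\<close> = log 0 of trivial blocks).\<close>
definition mu :: "nat \<Rightarrow> 'n::finite cmat \<Rightarrow> real" where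
  "mu k \<rho> = log 2 (Max ((\<lambda>I. opnorm (Proj I ** Rmat \<rho> ** Proj I)) ` {I. card I \<le> k}))"

definition incoh_kraus :: "'n::finite cmat \<Rightarrow> bool" where
  "incoh_kraus K \<longleftrightarrow> (\<forall>j. \<exists>i c. K *v axis j 1 = axis i c)"

definition SIO :: "('n::finite cmat \<Rightarrow> 'n cmat) \<Rightarrow> bool" where
  "SIO \<Lambda> \<longleftrightarrow> (\<exists>Ks :: 'n cmat list.
      (\<forall>K\<in>set Ks. incoh_kraus K \<and> incoh_kraus (adj K)) \<and>
      sum_list (map (\<lambda>K. adj K ** K) Ks) = mat 1 \<and>
      (\<forall>X. \<Lambda> X = sum_list (map (\<lambda>K. K ** X ** adj K) Ks)))"

definition lsc_on :: "'a::topological_space set \<Rightarrow> ('a \<Rightarrow> real) \<Rightarrow> bool" where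
  "lsc_on S f \<longleftrightarrow> (\<forall>x\<in>S. \<forall>t. t < f x \<longrightarrow> (\<forall>\<^sub>F y in at x within S. t < f y))"

end

theory Submission imports Defs begin

text \<open>Write \<open>R = \<Delta>(\<rho>)^{-1/2} \<rho> \<Delta>(\<rho>)^{-1/2}\<close>. The substitution
  \<open>x = \<Delta>(\<rho>)^{1/2} y\<close> shows \<open>\<parallel>\<Pi>_I R \<Pi>_I\<parallel> \<le> c\<close> iff \<open>\<Pi>_I \<rho> \<Pi>_I \<le> c \<Delta>(\<rho>)\<close>, because a
  positive semidefinite \<open>\<rho>\<close> vanishes off the support of its diagonal. So \<open>\<mu>_k(\<rho>) \<le> t\<close> iff
  every block \<open>\<Pi>_I \<rho> \<Pi>_I\<close> with \<open>|I| \<le> k\<close> is dominated by \<open>2^t \<Delta>(\<rho>)\<close>, which is (b).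
  For (a), a basis vector in the support of \<open>\<Delta>(\<rho>)\<close> gives a block of norm at least 1, and
  \<open>\<langle>v, \<rho> v\<rangle> \<le> |I| \<Sum>_{i\<in>I} \<langle>v_i, \<rho> v_i\<rangle>\<close> for \<open>v = \<Sum>_{i\<in>I} v_i\<close> bounds every
  block norm by \<open>|I|\<close>.
  For (c), a Kraus operator \<open>K\<close> of an SIO has at most one nonzero entry in each row and each
  column, so \<open>K\<^sup>\<dagger> \<Pi>_I\<close> has range inside that of some \<open>\<Pi>_J\<close> with \<open>|J| \<le> |I|\<close>, and
  \<open>\<Delta>(K \<rho> K\<^sup>\<dagger>) = K \<Delta>(\<rho>) K\<^sup>\<dagger>\<close>; hence block domination passes to every Kraus term and to
  their sum. For (d), block domination is an intersection of conditions that are closed in \<open>\<rho>\<close>.\<close>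

abbreviation qform :: "'n::finite cmat \<Rightarrow> complex^'n \<Rightarrow> real" where
  "qform A x \<equiv> inner x (A *v x)"

lemma inner_cvec_eq: "inner (x::complex^'n::finite) y = Re (\<Sum>i\<in>UNIV. cnj (x$i) * y$i)"
  by (simp add: inner_vec_def inner_complex_def Re_sum)

lemma norm_cvec_power2: "(norm (y::complex^'n::finite))^2 = (\<Sum>i\<in>UNIV. (cmod (y$i))^2)"
  by (simp add: norm_vec_def L2_set_def sum_nonneg)

lemma matrix_vector_mult_scaleR_left: "((c::real) *\<^sub>R (A::'n::finite cmat)) *v x = c *\<^sub>R (A *v x)"
  by (simp add: vec_eq_iff matrix_vector_mult_def scaleR_sum_right)

lemma matrix_vector_mult_scaleR_right: "(A::'n::finite cmat) *v (c *\<^sub>R x) = c *\<^sub>R (A *v x)"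
  using linear_iff matrix_vector_mul_linear by blast

lemma matrix_vector_mult_sum: "(A::'n::finite cmat) *v sum v S = (\<Sum>j\<in>S. A *v v j)"
  by (induct S rule: infinite_finite_induct) (simp_all add: matrix_vector_right_distrib)

lemma matrix_vector_mult_axis_nth: "((A::'n::finite cmat) *v axis j a)$i = A$i$j * a"
  by (simp add: matrix_vector_mult_def axis_def if_distrib[where f = "\<lambda>c. _ * c"] cong: if_cong)

lemma sum_UNIV_single:
  assumes "\<And>j. j \<noteq> a \<Longrightarrow> f j = 0"
  shows "(\<Sum>j\<in>(UNIV::'n::finite set). f j) = (f a :: 'a::comm_monoid_add)"
proof -
  have "f = (\<lambda>j. if j = a then f a else 0)" using assms by auto
  then show ?thesis by (subst (1) \<open>f = _\<close>) simp
qed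

lemma inner_adj: "inner x ((A::'n::finite cmat) *v y) = inner (adj A *v x) y"
proof -
  have "(\<Sum>i\<in>UNIV. cnj (x$i) * (A *v y)$i) = (\<Sum>i\<in>UNIV. \<Sum>j\<in>UNIV. cnj (x$i) * A$i$j * y$j)"
    by (simp add: matrix_vector_mult_def sum_distrib_left mult.assoc)
  also have "\<dots> = (\<Sum>j\<in>UNIV. \<Sum>i\<in>UNIV. cnj (x$i) * A$i$j * y$j)"
    by (rule sum.swap)
  also have "\<dots> = (\<Sum>j\<in>UNIV. cnj ((adj A *v x)$j) * y$j)"
    by (simp add: matrix_vector_mult_def adj_def sum_distrib_right sum_distrib_left
        mult.commute mult.left_commute)
  finally show ?thesis by (simp add: inner_cvec_eq)
qed

lemma adj_mv_nth: "(adj K *v y)$j = (\<Sum>i\<in>UNIV. cnj (K$i$j) * y$i)"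
  by (simp add: matrix_vector_mult_def adj_def)

lemma adj_adj [simp]: "adj (adj A) = A"
  by (simp add: adj_def vec_eq_iff)

lemma adj_zero [simp]: "adj (0::'n::finite cmat) = 0"
  by (simp add: adj_def vec_eq_iff)

lemma adj_add: "adj ((A::'n::finite cmat) + B) = adj A + adj B"
  by (simp add: adj_def vec_eq_iff)

lemma adj_diff: "adj ((A::'n::finite cmat) - B) = adj A - adj B"
  by (simp add: adj_def vec_eq_iff)

lemma adj_scaleR: "adj ((c::real) *\<^sub>R (A::'n::finite cmat)) = c *\<^sub>R adj A"
  by (simp add: adj_def vec_eq_iff)

lemma adj_mult: "adj ((A::'n::finite cmat) ** B) = adj B ** adj A"
  by (simp add: adj_def vec_eq_iff matrix_matrix_mult_def mult.commute)

lemma hermitian_inner_commute: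
  "hermitian (A::'n::finite cmat) \<Longrightarrow> inner x (A *v y) = inner y (A *v x)"
  by (metis hermitian_def inner_adj inner_commute)

lemma hermitian_of_real_Re_diag:
  assumes "hermitian A"
  shows "complex_of_real (Re (A$i$i)) = A$i$i"
proof -
  have "cnj (A$i$i) = A$i$i"
    using arg_cong[OF assms[unfolded hermitian_def], of "\<lambda>B. B$i$i"] by (simp add: adj_def)
  then have "Im (A$i$i) = 0" by (metis cnj.simps(2) neg_equal_zero)
  then show ?thesis by (simp add: complex_eq_iff)
qed

lemma hermitian_sandwich: "hermitian A \<Longrightarrow> hermitian (K ** A ** adj K)"
  unfolding hermitian_def by (simp add: adj_mult matrix_mul_assoc)

lemma qform_sandwich: "qform (K ** A ** adj K) x = qform A (adj K *v x)"
  by (simp add: matrix_vector_mul_assoc[symmetric] inner_adj)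

definition diag_mat :: "('n::finite \<Rightarrow> real) \<Rightarrow> 'n cmat" where
  "diag_mat a = (\<chi> i j. if i = j then complex_of_real (a i) else 0)"

lemma diag_mat_mv: "diag_mat a *v x = (\<chi> i. complex_of_real (a i) * x$i)"
  by (simp add: diag_mat_def matrix_vector_mult_def vec_eq_iff
      if_distrib[where f = "\<lambda>c. c * _"] cong: if_cong)

lemma adj_diag_mat [simp]: "adj (diag_mat a) = diag_mat a"
  by (simp add: adj_def diag_mat_def vec_eq_iff)

lemma diag_mat_mv_commute: "diag_mat a *v (diag_mat b *v x) = diag_mat b *v (diag_mat a *v x)"
  by (simp add: diag_mat_mv vec_eq_iff)

lemma qform_diag_mat: "qform (diag_mat a) x = (\<Sum>i\<in>UNIV. a i * (cmod (x$i))^2)"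
  by (simp add: inner_vec_def inner_complex_def diag_mat_mv cmod_power2)
    (simp add: power2_eq_square algebra_simps)

lemma Proj_eq_diag_mat: "Proj I = diag_mat (indicator I)"
  by (simp add: Proj_def diag_mat_def vec_eq_iff indicator_def)

lemma Proj_mv_nth [simp]: "(Proj I *v x)$i = (if i \<in> I then x$i else 0)"
  by (simp add: Proj_eq_diag_mat diag_mat_mv indicator_def)

lemma Proj_mv_eq_self: "(\<And>i. i \<notin> I \<Longrightarrow> x$i = 0) \<Longrightarrow> Proj I *v x = x"
  by (auto simp: vec_eq_iff)

lemma qform_Proj_sandwich: "qform (Proj I ** A ** Proj I) x = qform A (Proj I *v x)"
  using qform_sandwich[where K = "Proj I" and A = A] by (simp add: Proj_eq_diag_mat)

definition inv_sqrt_diag :: "'n::finite cmat \<Rightarrow> 'n \<Rightarrow> real" where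
  "inv_sqrt_diag A i = (if 0 < Re (A$i$i) then 1 / sqrt (Re (A$i$i)) else 0)"

lemma Dinvsqrt_eq_diag_mat: "Dinvsqrt A = diag_mat (inv_sqrt_diag A)"
  by (simp add: Dinvsqrt_def diag_mat_def inv_sqrt_diag_def vec_eq_iff)

lemma Dephase_eq_diag_mat: "hermitian A \<Longrightarrow> Dephase A = diag_mat (\<lambda>i. Re (A$i$i))"
  by (simp add: Dephase_def diag_mat_def vec_eq_iff hermitian_of_real_Re_diag)

lemma qform_Dephase:
  "hermitian A \<Longrightarrow> qform (Dephase A) x = (\<Sum>i\<in>UNIV. Re (A$i$i) * (cmod (x$i))^2)"
  by (simp add: Dephase_eq_diag_mat qform_diag_mat)

lemma Dephase_add: "Dephase (A + B) = Dephase A + Dephase B"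
  by (simp add: Dephase_def vec_eq_iff)

lemma Dephase_zero: "Dephase (0::'n::finite cmat) = 0"
  by (simp add: Dephase_def vec_eq_iff)

subsection \<open>Quadratic forms of positive semidefinite matrices\<close>

lemma psd_iff_qform: "psd A \<longleftrightarrow> hermitian A \<and> (\<forall>x. 0 \<le> qform A x)"
  by (simp add: psd_def inner_cvec_eq)

lemma psd_hermitian: "psd A \<Longrightarrow> hermitian A"
  by (simp add: psd_iff_qform)

lemma psd_qform_nonneg: "psd A \<Longrightarrow> 0 \<le> qform A x"
  by (simp add: psd_iff_qform)

lemma qform_add: "qform (A + B) x = qform A x + qform B x"
  by (simp add: matrix_vector_mult_add_rdistrib inner_add_right)

lemma continuous_on_qform: "continuous_on UNIV (\<lambda>A::'n::finite cmat. qform A x)"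
  unfolding inner_vec_def matrix_vector_mult_def by (intro continuous_intros)

lemma continuous_on_qform_Dephase: "continuous_on UNIV (\<lambda>A::'n::finite cmat. qform (Dephase A) x)"
proof -
  have "Dephase A *v x = (\<chi> i. A$i$i * x$i)" for A :: "'n cmat"
    by (simp add: Dephase_def matrix_vector_mult_def vec_eq_iff
        if_distrib[where f = "\<lambda>c. c * _"] cong: if_cong)
  then show ?thesis unfolding inner_vec_def by (simp only:) (intro continuous_intros)
qed

lemma psd_zero: "psd (0::'n::finite cmat)"
  by (simp add: psd_iff_qform hermitian_def)

lemma psd_add: "psd A \<Longrightarrow> psd B \<Longrightarrow> psd (A + B)"
  by (simp add: psd_iff_qform hermitian_def adj_add qform_add)

lemma psd_sandwich: "psd A \<Longrightarrow> psd (K ** A ** adj K)"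
  by (simp add: psd_iff_qform hermitian_sandwich qform_sandwich)

lemma psd_cauchy_schwarz:
  assumes "psd A"
  shows "(inner u (A *v v))^2 \<le> qform A u * qform A v"
proof -
  define a b c where "a = qform A u" and "b = inner u (A *v v)" and "c = qform A v"
  have sym: "inner v (A *v u) = b"
    unfolding b_def using hermitian_inner_commute[OF psd_hermitian[OF assms]] by simp
  have quad: "0 \<le> a + 2 * t * b + t^2 * c" for t
  proof -
    have "qform A (u + t *\<^sub>R v) = a + t * (b + inner v (A *v u)) + t^2 * c"
      by (simp add: a_def b_def c_def matrix_vector_right_distrib matrix_vector_mult_scaleR_right
          inner_add_left inner_add_right algebra_simps power2_eq_square)
    then show ?thesis using psd_qform_nonneg[OF assms, of "u + t *\<^sub>R v"] by (simp add: sym)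
  qed
  have "0 \<le> a" "0 \<le> c" unfolding a_def c_def using psd_qform_nonneg[OF assms] by auto
  show ?thesis
  proof (cases "c = 0")
    case True
    have "b = 0"
    proof (rule ccontr)
      assume "b \<noteq> 0"
      have "0 \<le> a + 2 * (- (a + 1) / (2 * b)) * b + (- (a + 1) / (2 * b))^2 * c" by (rule quad)
      also have "\<dots> = -1" using True \<open>b \<noteq> 0\<close> by (simp add: field_simps)
      finally show False by simp
    qed
    then show ?thesis using True \<open>0 \<le> a\<close> by (simp add: a_def b_def c_def)
  next
    case False
    then have "0 < c" using \<open>0 \<le> c\<close> by simp
    have "0 \<le> a + 2 * (- b / c) * b + (- b / c)^2 * c" by (rule quad)
    also have "\<dots> = a - b^2 / c" using \<open>0 < c\<close> by (simp add: field_simps power2_eq_square)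
    finally have "b^2 \<le> a * c" using \<open>0 < c\<close> by (simp add: divide_le_eq)
    then show ?thesis by (simp add: a_def b_def c_def)
  qed
qed

lemma opnorm_le_of_qform_le:
  assumes "psd B" "0 \<le> c" "\<And>y. qform B y \<le> c * (norm y)^2"
  shows "opnorm B \<le> c"
  unfolding opnorm_def
proof (rule onorm_le)
  fix y :: "complex^'a"
  define u where "u = B *v y"
  have pos: "\<And>x. 0 \<le> qform B x" using psd_qform_nonneg[OF assms(1)] .
  have "(inner u (B *v y))^2 \<le> qform B u * qform B y" by (rule psd_cauchy_schwarz[OF assms(1)])
  also have "\<dots> \<le> (c * (norm u)^2) * (c * (norm y)^2)"
    by (rule mult_mono[OF assms(3) assms(3)]) (use pos assms(2) in auto)
  finally have le: "(norm u)^2 * (norm u)^2 \<le> (norm u)^2 * (c * norm y)^2"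
    by (simp add: u_def power2_norm_eq_inner[symmetric] power2_eq_square algebra_simps)
  have "(norm u)^2 \<le> (c * norm y)^2"
  proof (cases "u = 0")
    case False
    then have "0 < (norm u)^2" by simp
    then show ?thesis by (rule mult_left_le_imp_le[OF le])
  qed simp
  then show "norm (B *v y) \<le> c * norm y"
    unfolding u_def by (rule power2_le_imp_le) (use assms(2) in simp)
qed

lemma qform_le_opnorm: "qform B y \<le> opnorm B * (norm y)^2"
proof -
  have "qform B y \<le> norm y * norm (B *v y)" by (rule norm_cauchy_schwarz)
  also have "\<dots> \<le> norm y * (opnorm B * norm y)"
    unfolding opnorm_def by (rule mult_left_mono[OF onorm]) simp_all
  finally show ?thesis by (simp add: power2_eq_square algebra_simps)
qed

lemma opnorm_nonneg: "0 \<le> opnorm (B::'n::finite cmat)"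
  unfolding opnorm_def by (rule onorm_pos_le) simp

lemma qform_axis: "qform A (axis i a) = (cmod a)^2 * Re (A$i$i)"
proof -
  have "qform A (axis i a) = inner a ((A *v axis i a)$i)" by (rule inner_axis')
  also have "(A *v axis i a)$i = A$i$i * a" by (rule matrix_vector_mult_axis_nth)
  also have "inner a (A$i$i * a) = Re (A$i$i * complex_of_real ((cmod a)^2))"
    by (simp add: inner_complex_def cmod_power2) (simp add: power2_eq_square algebra_simps)
  finally show ?thesis by simp
qed

lemma psd_diag_nonneg: "psd A \<Longrightarrow> 0 \<le> Re (A$i$i)"
  using psd_qform_nonneg[of A "axis i 1"] by (simp add: qform_axis)

lemma psd_row_zero_if_diag_zero:
  assumes "psd A" "Re (A$i$i) = 0"
  shows "(A *v z)$i = 0"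
proof -
  have zero: "inner (axis i a) (A *v z) = 0" for a
  proof -
    have "(inner (axis i a) (A *v z))^2 \<le> qform A (axis i a) * qform A z"
      by (rule psd_cauchy_schwarz[OF assms(1)])
    also have "\<dots> = 0" using assms(2) by (simp add: qform_axis)
    finally show ?thesis by simp
  qed
  show ?thesis
    using zero[of 1] zero[of \<i>] by (simp add: inner_axis' inner_complex_def complex_eq_iff)
qed

lemma qform_restrict_diag_support:
  assumes "psd A"
  shows "qform A z = qform A (Proj {i. 0 < Re (A$i$i)} *v z)"
proof -
  define z1 where "z1 = Proj {i. 0 < Re (A$i$i)} *v z"
  define w where "w = z - z1"
  have w0: "inner w (A *v v) = 0" for v
  proof -
    have "inner (w$i) ((A *v v)$i) = 0" for i
    proof (cases "0 < Re (A$i$i)")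
      case True
      then show ?thesis by (simp add: w_def z1_def)
    next
      case False
      then have "Re (A$i$i) = 0" using psd_diag_nonneg[OF assms, of i] by simp
      then show ?thesis using psd_row_zero_if_diag_zero[OF assms] by simp
    qed
    then show ?thesis by (simp add: inner_vec_def)
  qed
  have "z = z1 + w" by (simp add: w_def)
  then have "qform A z = qform A z1 + inner z1 (A *v w) + inner w (A *v z1) + qform A w"
    by (simp add: matrix_vector_right_distrib inner_add_left inner_add_right)
  also have "inner z1 (A *v w) = 0"
    using hermitian_inner_commute[OF psd_hermitian[OF assms]] w0 by metis
  finally show ?thesis using w0 by (simp add: z1_def)
qed

lemma qform_sum_le_card:
  assumes "psd A" "finite S"
  shows "qform A (\<Sum>i\<in>S. v i) \<le> real (card S) * (\<Sum>i\<in>S. qform A (v i))"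
proof -
  have cross: "inner (v i) (A *v v j) \<le> (qform A (v i) + qform A (v j)) / 2" for i j
  proof -
    have "0 \<le> qform A (v i - v j)" by (rule psd_qform_nonneg[OF assms(1)])
    then show ?thesis
      using hermitian_inner_commute[OF psd_hermitian[OF assms(1)], of "v j" "v i"]
      by (simp add: matrix_vector_mult_diff_distrib inner_diff_left inner_diff_right)
  qed
  have "qform A (\<Sum>i\<in>S. v i) = (\<Sum>i\<in>S. \<Sum>j\<in>S. inner (v i) (A *v v j))"
    by (simp only: matrix_vector_mult_sum inner_sum_left) (simp only: inner_sum_right)
  also have "\<dots> \<le> (\<Sum>i\<in>S. \<Sum>j\<in>S. (qform A (v i) + qform A (v j)) / 2)"
    by (intro sum_mono cross)
  also have "\<dots> = real (card S) * (\<Sum>i\<in>S. qform A (v i))"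
    by (simp add: sum_divide_distrib[symmetric] sum.distrib sum_distrib_left
        sum_distrib_right mult.commute)
  finally show ?thesis .
qed

lemma qform_Dephase_mono:
  assumes "psd A" "\<And>j. cmod (y$j) \<le> cmod (z$j)"
  shows "qform (Dephase A) y \<le> qform (Dephase A) z"
  unfolding qform_Dephase[OF psd_hermitian[OF assms(1)]]
  by (rule sum_mono, rule mult_left_mono)
    (simp_all add: power_mono assms(2) psd_diag_nonneg[OF assms(1)])

subsection \<open>Blocks of the rescaled matrix\<close>

lemma qform_block_Rmat:
  "qform (Proj I ** Rmat A ** Proj I) y = qform A (diag_mat (inv_sqrt_diag A) *v (Proj I *v y))"
  unfolding qform_Proj_sandwich Rmat_def Dinvsqrt_eq_diag_mat
  using qform_sandwich[where K = "diag_mat (inv_sqrt_diag A)" and A = A] by simp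

lemma psd_block_Rmat:
  assumes "psd A"
  shows "psd (Proj I ** Rmat A ** Proj I)"
proof -
  have "hermitian (Rmat A)"
    using hermitian_sandwich[OF psd_hermitian[OF assms], where K = "Dinvsqrt A"]
    by (simp add: Rmat_def Dinvsqrt_eq_diag_mat)
  then have "hermitian (Proj I ** Rmat A ** Proj I)"
    using hermitian_sandwich[where K = "Proj I"] by (simp add: Proj_eq_diag_mat)
  then show ?thesis
    using assms by (simp add: psd_iff_qform qform_block_Rmat)
qed

lemma Proj_mv_diag_mat_commute: "Proj I *v (diag_mat a *v x) = diag_mat a *v (Proj I *v x)"
  unfolding Proj_eq_diag_mat by (rule diag_mat_mv_commute)

lemma inv_sqrt_diag_mv_sqrt_diag:
  assumes "psd A"
  shows "diag_mat (inv_sqrt_diag A) *v (diag_mat (\<lambda>i. sqrt (Re (A$i$i))) *v x)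
         = Proj {i. 0 < Re (A$i$i)} *v x"
  unfolding vec_eq_iff
proof
  fix i
  have "complex_of_real (inv_sqrt_diag A i) * complex_of_real (sqrt (Re (A$i$i))) =
        (if 0 < Re (A$i$i) then 1 else 0)"
    using psd_diag_nonneg[OF assms, of i] by (simp add: inv_sqrt_diag_def flip: of_real_mult)
  then show "(diag_mat (inv_sqrt_diag A) *v (diag_mat (\<lambda>i. sqrt (Re (A$i$i))) *v x))$i =
             (Proj {i. 0 < Re (A$i$i)} *v x)$i"
    by (simp add: diag_mat_mv mult.assoc[symmetric])
qed

lemma qform_Dephase_eq_norm_sqrt_diag:
  assumes "psd A"
  shows "qform (Dephase A) x = (norm (diag_mat (\<lambda>i. sqrt (Re (A$i$i))) *v x))^2"
  using psd_diag_nonneg[OF assms]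
  by (simp add: norm_cvec_power2 qform_Dephase[OF psd_hermitian[OF assms]] diag_mat_mv
      norm_mult power_mult_distrib)

lemma qform_Dephase_inv_sqrt_diag_le:
  assumes "psd A"
  shows "qform (Dephase A) (diag_mat (inv_sqrt_diag A) *v y) \<le> (norm y)^2"
  unfolding qform_Dephase[OF psd_hermitian[OF assms]] norm_cvec_power2
proof (rule sum_mono)
  fix i
  show "Re (A$i$i) * (cmod ((diag_mat (inv_sqrt_diag A) *v y)$i))^2 \<le> (cmod (y$i))^2"
    using psd_diag_nonneg[OF assms, of i]
    by (simp add: diag_mat_mv inv_sqrt_diag_def norm_mult power_mult_distrib power_divide)
qed

text \<open>The substitution \<open>x = \<Delta>(A)^{1/2} y\<close> turns the norm bound on \<open>\<Pi>_I R \<Pi>_I\<close> into a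
  bound of the quadratic form of \<open>A\<close> on \<open>ran \<Pi>_I\<close> by that of \<open>\<Delta>(A)\<close>; vectors off the
  support of \<open>\<Delta>(A)\<close> are invisible to both sides.\<close>

lemma block_norm_le_iff:
  assumes "psd A" "0 \<le> c"
  shows "opnorm (Proj I ** Rmat A ** Proj I) \<le> c \<longleftrightarrow>
         (\<forall>x. qform A (Proj I *v x) \<le> c * qform (Dephase A) x)"
proof (intro iffI allI)
  fix x
  assume norm: "opnorm (Proj I ** Rmat A ** Proj I) \<le> c"
  define y where "y = diag_mat (\<lambda>i. sqrt (Re (A$i$i))) *v x"
  have "qform A (Proj I *v x) = qform A (Proj {i. 0 < Re (A$i$i)} *v (Proj I *v x))"
    by (rule qform_restrict_diag_support[OF assms(1)])
  also have "\<dots> = qform (Proj I ** Rmat A ** Proj I) y"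
    by (simp add: qform_block_Rmat y_def Proj_mv_diag_mat_commute
        inv_sqrt_diag_mv_sqrt_diag[OF assms(1)])
  also have "\<dots> \<le> opnorm (Proj I ** Rmat A ** Proj I) * (norm y)^2" by (rule qform_le_opnorm)
  also have "\<dots> \<le> c * qform (Dephase A) x"
    unfolding y_def qform_Dephase_eq_norm_sqrt_diag[OF assms(1)]
    by (rule mult_right_mono[OF norm]) simp
  finally show "qform A (Proj I *v x) \<le> c * qform (Dephase A) x" .
next
  assume H: "\<forall>x. qform A (Proj I *v x) \<le> c * qform (Dephase A) x"
  show "opnorm (Proj I ** Rmat A ** Proj I) \<le> c"
  proof (rule opnorm_le_of_qform_le[OF psd_block_Rmat[OF assms(1)] assms(2)])
    fix y
    define z where "z = diag_mat (inv_sqrt_diag A) *v y"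
    have "qform (Proj I ** Rmat A ** Proj I) y = qform A (Proj I *v z)"
      by (simp add: qform_block_Rmat z_def Proj_mv_diag_mat_commute)
    also have "\<dots> \<le> c * qform (Dephase A) z" using H by blast
    also have "\<dots> \<le> c * (norm y)^2"
      unfolding z_def
      by (rule mult_left_mono[OF qform_Dephase_inv_sqrt_diag_le[OF assms(1)] assms(2)])
    finally show "qform (Proj I ** Rmat A ** Proj I) y \<le> c * (norm y)^2" .
  qed
qed

lemma block_norm_le_card:
  assumes "psd A"
  shows "opnorm (Proj I ** Rmat A ** Proj I) \<le> real (card I)"
proof (rule opnorm_le_of_qform_le[OF psd_block_Rmat[OF assms]])
  fix y
  have diag: "0 \<le> Re (A$i$i)" for i using psd_diag_nonneg[OF assms] .
  have split: "diag_mat (inv_sqrt_diag A) *v (Proj I *v y) =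
               (\<Sum>i\<in>I. axis i (complex_of_real (inv_sqrt_diag A i) * y$i))"
    by (simp add: vec_eq_iff diag_mat_mv axis_def)
  have "qform (Proj I ** Rmat A ** Proj I) y
        \<le> real (card I) * (\<Sum>i\<in>I. qform A (axis i (complex_of_real (inv_sqrt_diag A i) * y$i)))"
    unfolding qform_block_Rmat split by (rule qform_sum_le_card[OF assms]) simp
  also have "(\<Sum>i\<in>I. qform A (axis i (complex_of_real (inv_sqrt_diag A i) * y$i)))
             \<le> (\<Sum>i\<in>I. (cmod (y$i))^2)"
  proof (rule sum_mono)
    fix i
    show "qform A (axis i (complex_of_real (inv_sqrt_diag A i) * y$i)) \<le> (cmod (y$i))^2"
      using diag[of i] by (simp add: qform_axis inv_sqrt_diag_def norm_mult power_mult_distrib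
          power_divide)
  qed
  also have "\<dots> \<le> (norm y)^2"
    unfolding norm_cvec_power2 by (rule sum_mono2) auto
  finally show "qform (Proj I ** Rmat A ** Proj I) y \<le> real (card I) * (norm y)^2"
    by (simp add: mult_left_mono)
qed simp

lemma loewner_block_iff:
  assumes "hermitian A"
  shows "loewner_le (Proj I ** A ** Proj I) (c *\<^sub>R Dephase A) \<longleftrightarrow>
         (\<forall>x. qform A (Proj I *v x) \<le> c * qform (Dephase A) x)"
proof -
  have "hermitian (Proj I ** A ** Proj I)"
    using hermitian_sandwich[OF assms, where K = "Proj I"] by (simp add: Proj_eq_diag_mat)
  then have "hermitian (c *\<^sub>R Dephase A - Proj I ** A ** Proj I)"
    by (simp add: hermitian_def adj_diff adj_scaleR Dephase_eq_diag_mat[OF assms])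
  moreover have "qform (c *\<^sub>R Dephase A - Proj I ** A ** Proj I) x
                 = c * qform (Dephase A) x - qform A (Proj I *v x)" for x
    by (simp add: matrix_vector_mult_diff_rdistrib matrix_vector_mult_scaleR_left
        inner_diff_right qform_Proj_sandwich)
  ultimately show ?thesis by (auto simp: loewner_le_def psd_iff_qform)
qed

text \<open>The condition \<open>\<Pi>_I A \<Pi>_I \<le> c \<Delta>(A)\<close> for all \<open>|I| \<le> k\<close>, phrased with quadratic forms.\<close>

definition block_dominated :: "nat \<Rightarrow> real \<Rightarrow> 'n::finite cmat \<Rightarrow> bool" where
  "block_dominated k c A \<longleftrightarrow>
     (\<forall>I x. card I \<le> k \<longrightarrow> qform A (Proj I *v x) \<le> c * qform (Dephase A) x)"

definition max_block_norm :: "nat \<Rightarrow> 'n::finite cmat \<Rightarrow> real" where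
  "max_block_norm k A = Max ((\<lambda>I. opnorm (Proj I ** Rmat A ** Proj I)) ` {I. card I \<le> k})"

lemma mu_eq_log_max_block_norm: "mu k A = log 2 (max_block_norm k A)"
  by (simp add: mu_def max_block_norm_def)

lemma max_block_norm_le_iff:
  "max_block_norm k A \<le> c \<longleftrightarrow> (\<forall>I. card I \<le> k \<longrightarrow> opnorm (Proj I ** Rmat A ** Proj I) \<le> c)"
proof -
  have "{I::'n set. card I \<le> k} \<noteq> {}" by (auto intro: exI[of _ "{}"])
  then show ?thesis unfolding max_block_norm_def by (subst Max_le_iff) auto
qed

lemma block_norm_le_max_block_norm:
  "card I \<le> k \<Longrightarrow> opnorm (Proj I ** Rmat A ** Proj I) \<le> max_block_norm k A"
  unfolding max_block_norm_def by (rule Max_ge) auto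

lemma max_block_norm_nonneg: "0 \<le> max_block_norm k A"
  using opnorm_nonneg block_norm_le_max_block_norm[of "{}" k A] by (rule order_trans) simp

lemma max_block_norm_le_iff_block_dominated:
  assumes "psd A" "0 \<le> c"
  shows "max_block_norm k A \<le> c \<longleftrightarrow> block_dominated k c A"
  unfolding max_block_norm_le_iff block_norm_le_iff[OF assms] block_dominated_def by blast

lemma block_dominated_iff_loewner:
  assumes "hermitian A"
  shows "block_dominated k c A \<longleftrightarrow>
         (\<forall>I. card I \<le> k \<longrightarrow> loewner_le (Proj I ** A ** Proj I) (c *\<^sub>R Dephase A))"
  unfolding block_dominated_def loewner_block_iff[OF assms] by blast

lemma max_block_norm_le_card: "psd A \<Longrightarrow> max_block_norm k A \<le> real k"
  unfolding max_block_norm_le_iff by (metis block_norm_le_card of_nat_mono order_trans)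

text \<open>A state has a basis vector \<open>e_i\<close> in the support of \<open>\<Delta>(A)\<close>, and
  \<open>\<langle>e_i, \<Pi>_{i} R \<Pi>_{i} e_i\<rangle> = 1\<close>.\<close>

lemma one_le_max_block_norm:
  assumes "is_state A" "1 \<le> k"
  shows "1 \<le> max_block_norm k A"
proof -
  have "\<exists>i. 0 < Re (A$i$i)"
  proof (rule ccontr)
    assume "\<nexists>i. 0 < Re (A$i$i)"
    then have "Re (ctrace A) \<le> 0" by (auto simp: ctrace_def not_less intro: sum_nonpos)
    then show False using assms(1) by (simp add: is_state_def)
  qed
  then obtain i where i: "0 < Re (A$i$i)" by blast
  have "diag_mat (inv_sqrt_diag A) *v (Proj {i} *v axis i 1) =
        axis i (complex_of_real (inv_sqrt_diag A i))"
    by (simp add: vec_eq_iff diag_mat_mv axis_def)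
  then have "qform (Proj {i} ** Rmat A ** Proj {i}) (axis i 1) = 1"
    using i by (simp add: qform_block_Rmat qform_axis inv_sqrt_diag_def power_divide norm_divide)
  then have "1 \<le> opnorm (Proj {i} ** Rmat A ** Proj {i}) * (norm (axis i (1::complex)))^2"
    using qform_le_opnorm[where B = "Proj {i} ** Rmat A ** Proj {i}" and y = "axis i 1"] by simp
  also have "norm (axis i (1::complex)) = 1" by (simp add: inner_axis' norm_eq_1)
  finally have "1 \<le> opnorm (Proj {i} ** Rmat A ** Proj {i})" by simp
  also have "\<dots> \<le> max_block_norm k A"
    using assms(2) by (intro block_norm_le_max_block_norm) simp
  finally show ?thesis .
qed

lemma mu_le_iff_block_dominated:
  assumes "is_state A" "1 \<le> k"
  shows "mu k A \<le> t \<longleftrightarrow> block_dominated k (2 powr t) A"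
proof -
  have "1 \<le> max_block_norm k A" by (rule one_le_max_block_norm[OF assms])
  then have "mu k A \<le> t \<longleftrightarrow> max_block_norm k A \<le> 2 powr t"
    by (simp add: mu_eq_log_max_block_norm log_le_iff)
  also have "\<dots> \<longleftrightarrow> block_dominated k (2 powr t) A"
    using assms(1) by (intro max_block_norm_le_iff_block_dominated) (simp_all add: is_state_def)
  finally show ?thesis .
qed

subsection \<open>Strictly incoherent Kraus operators\<close>

lemma incoh_kraus_column:
  assumes "incoh_kraus K"
  obtains \<tau> where "\<And>i j. i \<noteq> \<tau> j \<Longrightarrow> K$i$j = 0"
proof -
  have "\<exists>i. \<forall>i'. i' \<noteq> i \<longrightarrow> K$i'$j = 0" for j
  proof -
    obtain i c where e: "K *v axis j 1 = axis i c" using assms unfolding incoh_kraus_def by blast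
    have "K$i'$j = 0" if "i' \<noteq> i" for i'
    proof -
      have "K$i'$j = (K *v axis j 1)$i'" by (simp add: matrix_vector_mult_axis_nth)
      also have "\<dots> = 0" unfolding e using that by (simp add: axis_def)
      finally show ?thesis .
    qed
    then show ?thesis by blast
  qed
  then obtain \<tau> where "\<forall>j i. i \<noteq> \<tau> j \<longrightarrow> K$i$j = 0" by metis
  then show ?thesis using that by blast
qed

lemma incoh_kraus_adj_row:
  assumes "incoh_kraus (adj K)"
  obtains \<sigma> where "\<And>i j. j \<noteq> \<sigma> i \<Longrightarrow> K$i$j = 0"
proof -
  obtain \<sigma> where \<sigma>: "\<And>j i. j \<noteq> \<sigma> i \<Longrightarrow> adj K $ j $ i = 0"
    using incoh_kraus_column[OF assms] by blast
  have "K$i$j = 0" if "j \<noteq> \<sigma> i" for i j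
    using \<sigma>[OF that] by (simp add: adj_def)
  then show ?thesis using that by blast
qed

lemma adj_mv_nth_single_column:
  assumes "\<And>i j. i \<noteq> \<tau> j \<Longrightarrow> K$i$j = 0"
  shows "(adj K *v y)$j = cnj (K$(\<tau> j)$j) * y$(\<tau> j)"
  unfolding adj_mv_nth by (rule sum_UNIV_single) (simp add: assms)

lemma sandwich_nth_single_row:
  assumes "\<And>i j. j \<noteq> \<sigma> i \<Longrightarrow> K$i$j = 0"
  shows "(K ** A ** adj K)$i$l = K$i$(\<sigma> i) * A$(\<sigma> i)$(\<sigma> l) * cnj (K$l$(\<sigma> l))"
proof -
  have row: "(\<Sum>j\<in>UNIV. K$i$j * B$j$m) = K$i$(\<sigma> i) * B$(\<sigma> i)$m" for i m and B :: "'a cmat"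
    by (rule sum_UNIV_single[where a = "\<sigma> i"]) (simp add: assms)
  have "(K ** A ** adj K)$i$l = (\<Sum>m\<in>UNIV. (K ** A)$i$m * cnj (K$l$m))"
    by (simp add: matrix_matrix_mult_def adj_def)
  also have "\<dots> = (\<Sum>m\<in>UNIV. K$i$(\<sigma> i) * A$(\<sigma> i)$m * cnj (K$l$m))"
    by (simp add: matrix_matrix_mult_def row)
  also have "\<dots> = K$i$(\<sigma> i) * A$(\<sigma> i)$(\<sigma> l) * cnj (K$l$(\<sigma> l))"
    by (rule sum_UNIV_single[where a = "\<sigma> l"]) (simp add: assms)
  finally show ?thesis .
qed

text \<open>Two distinct rows of \<open>K\<close> cannot have their nonzero entry in the same column, so
  \<open>K \<Delta>(A) K\<^sup>\<dagger>\<close> is already diagonal.\<close>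

lemma Dephase_sandwich:
  assumes col: "\<And>i j. i \<noteq> \<tau> j \<Longrightarrow> K$i$j = 0"
    and row: "\<And>i j. j \<noteq> \<sigma> i \<Longrightarrow> K$i$j = 0"
  shows "Dephase (K ** A ** adj K) = K ** Dephase A ** adj K"
proof -
  have "K$i$(\<sigma> i) * cnj (K$l$(\<sigma> l)) = 0" if "i \<noteq> l" "\<sigma> i = \<sigma> l" for i l
  proof (cases "i = \<tau> (\<sigma> i)")
    case True
    then have "l \<noteq> \<tau> (\<sigma> l)" using that by metis
    then show ?thesis by (simp add: col)
  next
    case False
    then show ?thesis by (simp add: col)
  qed
  then show ?thesis
    by (auto simp: vec_eq_iff sandwich_nth_single_row[OF row] Dephase_def)
qed

text \<open>\<open>K\<^sup>\<dagger>\<close> maps \<open>ran \<Pi>_I\<close> into \<open>ran \<Pi>_{\<sigma>(I)}\<close> with \<open>|\<sigma>(I)| \<le> |I|\<close>, which is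
  where block domination survives the sandwich.\<close>

lemma block_dominated_sandwich:
  assumes "incoh_kraus K" "incoh_kraus (adj K)"
    and "psd A" "0 \<le> c" and dom: "block_dominated k c A"
  shows "block_dominated k c (K ** A ** adj K)"
  unfolding block_dominated_def
proof (intro allI impI)
  fix I :: "'a set" and x
  assume I: "card I \<le> k"
  obtain \<tau> where col: "\<And>i j. i \<noteq> \<tau> j \<Longrightarrow> K$i$j = 0"
    using incoh_kraus_column[OF assms(1)] by blast
  obtain \<sigma> where row: "\<And>i j. j \<noteq> \<sigma> i \<Longrightarrow> K$i$j = 0"
    using incoh_kraus_adj_row[OF assms(2)] by blast
  define y where "y = adj K *v (Proj I *v x)"
  have "Proj (\<sigma> ` I) *v y = y"
  proof (rule Proj_mv_eq_self)
    fix j assume j: "j \<notin> \<sigma> ` I"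
    have "cnj (K$i$j) * (Proj I *v x)$i = 0" for i
      using row[of j i] j by (cases "i \<in> I") auto
    then show "y$j = 0" unfolding y_def adj_mv_nth by (intro sum.neutral) blast
  qed
  moreover have "card (\<sigma> ` I) \<le> k" using card_image_le[of I \<sigma>] I by simp
  then have "qform A (Proj (\<sigma> ` I) *v y) \<le> c * qform (Dephase A) y"
    using dom unfolding block_dominated_def by blast
  ultimately have "qform A y \<le> c * qform (Dephase A) y" by simp
  also have "qform (Dephase A) y \<le> qform (Dephase A) (adj K *v x)"
    by (rule qform_Dephase_mono[OF assms(3)])
      (simp add: y_def adj_mv_nth_single_column[OF col] norm_mult)
  then have "c * qform (Dephase A) y \<le> c * qform (Dephase A) (adj K *v x)"
    by (rule mult_left_mono) (rule assms(4))
  finally show "qform (K ** A ** adj K) (Proj I *v x) \<le> c * qform (Dephase (K ** A ** adj K)) x"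
    by (simp add: y_def qform_sandwich Dephase_sandwich[OF col row])
qed

lemma block_dominated_zero: "block_dominated k c 0"
  by (simp add: block_dominated_def Dephase_zero)

lemma block_dominated_add:
  "block_dominated k c A \<Longrightarrow> block_dominated k c B \<Longrightarrow> block_dominated k c (A + B)"
  unfolding block_dominated_def
  by (simp add: qform_add Dephase_add distrib_left add_mono)

lemma SIO_preserves_block_dominated:
  assumes "SIO \<Lambda>" "psd A" "0 \<le> c" "block_dominated k c A"
  shows "psd (\<Lambda> A) \<and> block_dominated k c (\<Lambda> A)"
proof -
  obtain Ks where Ks: "\<forall>K\<in>set Ks. incoh_kraus K \<and> incoh_kraus (adj K)"
    and \<Lambda>: "\<Lambda> A = sum_list (map (\<lambda>K. K ** A ** adj K) Ks)"
    using assms(1) unfolding SIO_def by blast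
  from Ks have "psd (sum_list (map (\<lambda>K. K ** A ** adj K) Ks)) \<and>
                block_dominated k c (sum_list (map (\<lambda>K. K ** A ** adj K) Ks))"
  proof (induction Ks)
    case Nil
    then show ?case by (simp add: psd_zero block_dominated_zero)
  next
    case (Cons K Ks)
    then show ?case
      using psd_sandwich[OF assms(2), of K] block_dominated_sandwich[OF _ _ assms(2-4), of K]
      by (auto intro: psd_add block_dominated_add)
  qed
  then show ?thesis by (simp add: \<Lambda>)
qed

lemma mu_bounds:
  assumes "is_state \<rho>" "1 \<le> k"
  shows "0 \<le> mu k \<rho> \<and> mu k \<rho> \<le> log 2 (real k)"
  using one_le_max_block_norm[OF assms] max_block_norm_le_card[of \<rho> k] assms(1)
  by (simp add: mu_eq_log_max_block_norm is_state_def)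

lemma mu_eq_Inf:
  assumes "is_state \<rho>" "1 \<le> k"
  shows "mu k \<rho> = Inf {\<nu>::real. \<forall>I. card I \<le> k \<longrightarrow>
                        loewner_le (Proj I ** \<rho> ** Proj I) ((2 powr \<nu>) *\<^sub>R Dephase \<rho>)}"
proof -
  have h: "hermitian \<rho>" using assms(1) by (simp add: is_state_def psd_hermitian)
  have "{\<nu>::real. \<forall>I. card I \<le> k \<longrightarrow>
                   loewner_le (Proj I ** \<rho> ** Proj I) ((2 powr \<nu>) *\<^sub>R Dephase \<rho>)} = {mu k \<rho>..}"
    by (auto simp: block_dominated_iff_loewner[OF h, symmetric] mu_le_iff_block_dominated[OF assms])
  then show ?thesis by simp
qed

lemma mu_SIO_mono:
  assumes "1 \<le> k" "SIO \<Lambda>" "is_state \<rho>"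
  shows "mu k (\<Lambda> \<rho>) \<le> mu k \<rho>"
proof -
  have \<rho>: "psd \<rho>" using assms(3) by (simp add: is_state_def)
  have "block_dominated k (2 powr mu k \<rho>) \<rho>"
    using mu_le_iff_block_dominated[OF assms(3,1), of "mu k \<rho>"] by simp
  then have \<Lambda>\<rho>: "psd (\<Lambda> \<rho>)" "block_dominated k (2 powr mu k \<rho>) (\<Lambda> \<rho>)"
    using SIO_preserves_block_dominated[OF assms(2) \<rho>, of "2 powr mu k \<rho>"] by simp_all
  then have le: "max_block_norm k (\<Lambda> \<rho>) \<le> 2 powr mu k \<rho>"
    using max_block_norm_le_iff_block_dominated[OF \<Lambda>\<rho>(1)] by simp
  show ?thesis
  proof (cases "max_block_norm k (\<Lambda> \<rho>) = 0")
    case True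
    \<comment> \<open>\<open>\<Lambda> \<rho>\<close> is not known to be a state here; Isabelle's \<open>log 2 0 = 0\<close> covers this case.\<close>
    then show ?thesis using mu_bounds[OF assms(3,1)] by (simp add: mu_eq_log_max_block_norm log_def)
  next
    case False
    then have "0 < max_block_norm k (\<Lambda> \<rho>)" using max_block_norm_nonneg order_le_less by metis
    then show ?thesis using le by (simp add: mu_eq_log_max_block_norm log_le_iff)
  qed
qed

text \<open>\<open>\<mu>_k(S) \<le> t\<close> is an intersection of the closed conditions
  \<open>\<langle>\<Pi>_I x, S \<Pi>_I x\<rangle> \<le> 2^t \<langle>x, \<Delta>(S) x\<rangle>\<close>.\<close>

lemma lsc_on_mu:
  assumes "1 \<le> k"
  shows "lsc_on {\<rho>::'n::finite cmat. is_state \<rho>} (mu k)"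
  unfolding lsc_on_def
proof (intro ballI allI impI)
  fix \<rho> :: "'n cmat" and t
  assume "\<rho> \<in> {\<rho>. is_state \<rho>}" and "t < mu k \<rho>"
  then have "\<not> block_dominated k (2 powr t) \<rho>"
    using mu_le_iff_block_dominated[OF _ assms, of \<rho> t] by simp
  then obtain I x where I: "card I \<le> k"
    and viol: "2 powr t * qform (Dephase \<rho>) x < qform \<rho> (Proj I *v x)"
    unfolding block_dominated_def by (auto simp: not_le)
  define g where "g S = qform S (Proj I *v x) - 2 powr t * qform (Dephase S) x" for S :: "'n cmat"
  have "continuous_on UNIV g"
    unfolding g_def by (intro continuous_intros continuous_on_qform continuous_on_qform_Dephase)
  then have "continuous_on {\<rho>. is_state \<rho>} g" by (rule continuous_on_subset) simp
  then have "(g \<longlongrightarrow> g \<rho>) (at \<rho> within {\<rho>. is_state \<rho>})"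
    using \<open>\<rho> \<in> {\<rho>. is_state \<rho>}\<close> by (simp add: continuous_on_def)
  moreover have "0 < g \<rho>" using viol by (simp add: g_def)
  ultimately have "\<forall>\<^sub>F S in at \<rho> within {\<rho>. is_state \<rho>}. 0 < g S"
    by (rule order_tendstoD)
  moreover have "\<forall>\<^sub>F S in at \<rho> within {\<rho>. is_state \<rho>}. is_state S"
    by (simp add: eventually_at_filter)
  ultimately show "\<forall>\<^sub>F S in at \<rho> within {\<rho>. is_state \<rho>}. t < mu k S"
  proof eventually_elim
    case (elim S)
    show "t < mu k S"
    proof (rule ccontr)
      assume "\<not> t < mu k S"
      then have "block_dominated k (2 powr t) S"
        using mu_le_iff_block_dominated[OF elim(2) assms, of t] by simp
      then have "g S \<le> 0" using I by (simp add: g_def block_dominated_def)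
      then show False using elim(1) by simp
    qed
  qed
qed

theorem lemma3:
  fixes k :: nat
  assumes "1 \<le> k" and "k \<le> CARD('n::finite)"
  shows "(\<forall>\<rho>::'n cmat. is_state \<rho> \<longrightarrow> 0 \<le> mu k \<rho> \<and> mu k \<rho> \<le> log 2 (real k))
       \<and> (\<forall>\<rho>::'n cmat. is_state \<rho> \<longrightarrow>
            mu k \<rho> = Inf {\<nu>::real. \<forall>I::'n set. card I \<le> k \<longrightarrow>
                          loewner_le (Proj I ** \<rho> ** Proj I) ((2 powr \<nu>) *\<^sub>R Dephase \<rho>)})
       \<and> (\<forall>(\<Lambda>::'n cmat \<Rightarrow> 'n cmat) \<rho>. SIO \<Lambda> \<longrightarrow> is_state \<rho> \<longrightarrow> mu k (\<Lambda> \<rho>) \<le> mu k \<rho>)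
       \<and> lsc_on {\<rho>::'n cmat. is_state \<rho>} (mu k)"
  using mu_bounds[OF _ assms(1)] mu_eq_Inf[OF _ assms(1)] mu_SIO_mono[OF assms(1)]
    lsc_on_mu[OF assms(1)]
  by blast

end
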